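(* For any $\Delta, k \in \mathbb{N}$ and $\xi > 0$ there exist $\beta > 0$ and $n_0 \in \mathbb{N}$ such that the following holds. Let $H$ be a bipartite graph on $n \geq n_0$ vertices with bandwidth at most $\beta n$ and $\Delta(H) \leq \Delta$. Let $n_1, n_2, \dots, n_{2k}$ be an integer partition of $n$ such that $n_i > n/(3k)$ for all $1 \leq i \leq 2k$ and $|n_{2i-1} - n_{2i}| \ll \xi n$ for all $1 \leq i \leq k$. Let $C$ be the cycle $1 2 \dots (2k) 1$ on vertex set $[2k]$ and let $c = \{2i_1, 2i_2\}$ be a chord of $C$ for some distinct $1 \leq i_1, i_2 \leq k$. Then there exist a set $S \subseteq V(H)$ and a graph homomorphism $f : H \to C \cup \{c\}$ such that: ($\beta_1$) $|S| \leq \xi n$; ($\beta_2$) $|f^{-1}(i)| \leq n_i + \xi n$ for all $1 \leq i \leq 2k$; ($\beta_3$) every edge of $H$ not in $H[S]$ is mapped to an edge $\{2i-1, 2i\}$ for some $1 \leq i \leq k$.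
   Context: The hypothesis $|n_{2i-1} - n_{2i}| \ll \xi n$ means $|n_{2i-1}-n_{2i}| \leq \lambda n$ for a constant $\lambda>0$ chosen sufficiently small relative to $\xi$. A graph $H$ on $n$ vertices has bandwidth at most $b$ if there is a labelling of its vertices by $1,\dots,n$ such that $|i-j| \leq b$ for every edge $ij$. $C \cup \{c\}$ denotes the graph obtained from the cycle $C$ by adding the edge $c$; a graph homomorphism maps edges to edges. *)

theory Defs
  imports Complex_Main
begin

definition simple_graph :: "'a set \<Rightarrow> 'a set set \<Rightarrow> bool" where
  "simple_graph V E \<longleftrightarrow> finite V \<and>
     (\<forall>e\<in>E. \<exists>u v. e = {u, v} \<and> u \<noteq> v \<and> u \<in> V \<and> v \<in> V)"

definition bipartite :: "'a set \<Rightarrow> 'a set set \<Rightarrow> bool" where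
  "bipartite V E \<longleftrightarrow> (\<exists>A B. A \<union> B = V \<and> A \<inter> B = {} \<and>
     (\<forall>u v. {u, v} \<in> E \<longrightarrow> (u \<in> A \<longleftrightarrow> v \<in> B)))"

definition max_degree_le :: "'a set \<Rightarrow> 'a set set \<Rightarrow> nat \<Rightarrow> bool" where
  "max_degree_le V E D \<longleftrightarrow> (\<forall>v\<in>V. card {u. {u, v} \<in> E} \<le> D)"

definition bandwidth_le :: "'a set \<Rightarrow> 'a set set \<Rightarrow> real \<Rightarrow> bool" where
  "bandwidth_le V E b \<longleftrightarrow> (\<exists>\<phi>. bij_betw \<phi> V {1..card V} \<and>
     (\<forall>u v. {u, v} \<in> E \<longrightarrow> \<bar>real (\<phi> u) - real (\<phi> v)\<bar> \<le> b))"

definition cycle_chord_edges :: "nat \<Rightarrow> nat \<Rightarrow> nat \<Rightarrow> nat set set" where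
  "cycle_chord_edges k i1 i2 =
     {{i, i + 1} | i. 1 \<le> i \<and> i < 2 * k} \<union> {{2 * k, 1}} \<union> {{2 * i1, 2 * i2}}"

definition graph_hom :: "'a set \<Rightarrow> 'a set set \<Rightarrow> nat \<Rightarrow> nat set set \<Rightarrow> ('a \<Rightarrow> nat) \<Rightarrow> bool" where
  "graph_hom V E m F f \<longleftrightarrow> (\<forall>v\<in>V. f v \<in> {1..m}) \<and>
     (\<forall>u v. {u, v} \<in> E \<longrightarrow> {f u, f v} \<in> F)"

end

theory Submission
  imports Defs
begin

text \<open>Label the vertices along a bandwidth ordering and cut the labels into blocks of width about
  \<open>\<beta> n\<close>, so that every edge joins equal or consecutive blocks; superblocks consist of
  \<open>(2k)^4 + 1\<close> blocks. Superblocks are assigned in order to the pairs \<open>{2i-1, 2i}\<close> in proportion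
  to the sizes of the parts \<open>2i-1\<close> and \<open>2i\<close>, and inside the range of pair \<open>i\<close> the orientation
  (which of \<open>2i-1\<close>, \<open>2i\<close> colours the side \<open>A\<close> of the bipartition) flips once, at a threshold found
  by a discrete intermediate value argument that balances the two colour classes. The resulting
  sequence of oriented edges changes at most \<open>2k\<close> times. The chord creates an odd cycle, so any two
  oriented edges are joined by a walk of length \<open>(2k)^4\<close> in the graph of compatible oriented edges;
  at each change the colouring follows such a walk, one block at a time, inside a single superblock.
  The vertices of these at most \<open>2k\<close> superblocks form the exceptional set \<open>S\<close>.\<close>

section \<open>Walks, thresholds and level sets\<close>

lemma relpow_ge_card_if_rtrancl:
  assumes "finite R" "(a, b) \<in> R\<^sup>*" "(b, b) \<in> R" "card R \<le> N"
  shows "(a, b) \<in> R ^^ N"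
proof -
  obtain m where m: "m \<le> card R" "(a, b) \<in> R ^^ m"
    using assms(1,2) rtrancl_finite_eq_relpow by blast
  have "(b, b) \<in> R ^^ j" for j by (induction j) (use assms(3) in auto)
  then have "(a, b) \<in> R ^^ (m + (N - m))"
    using m(2) relpow_add by blast
  then show ?thesis using m(1) assms(4) by simp
qed

lemma walks_between_consecutive:
  fixes \<tau> :: "nat \<Rightarrow> 'a" and K :: nat
  assumes refl: "\<And>j. (\<tau> j, \<tau> j) \<in> R"
    and walk: "\<And>j. \<exists>w. w 0 = \<tau> j \<and> w K = \<tau> (Suc j) \<and> (\<forall>r<K. (w r, w (Suc r)) \<in> R)"
  obtains \<omega> where "\<And>j. \<omega> j 0 = \<tau> (j - 1)" and "\<And>j. \<omega> j K = \<tau> j"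
    and "\<And>j r. r < K \<Longrightarrow> (\<omega> j r, \<omega> j (Suc r)) \<in> R"
    and "\<And>j r. \<tau> (j - 1) = \<tau> j \<Longrightarrow> \<omega> j r = \<tau> j"
proof
  define \<omega> where "\<omega> j = (if \<tau> (j - 1) = \<tau> j then (\<lambda>_. \<tau> j)
    else (SOME w. w 0 = \<tau> (j - 1) \<and> w K = \<tau> j \<and> (\<forall>r<K. (w r, w (Suc r)) \<in> R)))" for j
  have \<omega>: "\<omega> j 0 = \<tau> (j - 1) \<and> \<omega> j K = \<tau> j \<and> (\<forall>r<K. (\<omega> j r, \<omega> j (Suc r)) \<in> R)" for j
  proof (cases "\<tau> (j - 1) = \<tau> j")
    case False
    then have "j = Suc (j - 1)" by (cases j) auto
    then have "\<exists>w. w 0 = \<tau> (j - 1) \<and> w K = \<tau> j \<and> (\<forall>r<K. (w r, w (Suc r)) \<in> R)"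
      using walk[of "j - 1"] by metis
    from someI_ex[OF this] False show ?thesis by (simp add: \<omega>_def)
  qed (simp add: \<omega>_def refl)
  then show "\<omega> j 0 = \<tau> (j - 1)" "\<omega> j K = \<tau> j" "r < K \<Longrightarrow> (\<omega> j r, \<omega> j (Suc r)) \<in> R" for j r
    by blast+
  show "\<tau> (j - 1) = \<tau> j \<Longrightarrow> \<omega> j r = \<tau> j" for j r by (simp add: \<omega>_def)
qed

text \<open>On the positions \<open>j * M, \<dots>, j * M + K\<close> the sequence \<open>\<sigma>\<close> follows a walk from
  \<open>\<tau> (j - 1)\<close> to \<open>\<tau> j\<close>; for \<open>j = 0\<close> truncated subtraction makes this the constant walk.\<close>

lemma walk_interpolation:
  fixes \<tau> :: "nat \<Rightarrow> 'a" and K :: nat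
  defines "M \<equiv> Suc K"
  assumes refl: "\<And>j. (\<tau> j, \<tau> j) \<in> R"
    and walk: "\<And>j. \<exists>w. w 0 = \<tau> j \<and> w K = \<tau> (Suc j) \<and> (\<forall>r<K. (w r, w (Suc r)) \<in> R)"
  obtains \<sigma> where "\<And>b. (\<sigma> b, \<sigma> (Suc b)) \<in> R"
    and "\<And>j b. \<tau> (j - 1) = \<tau> j \<Longrightarrow> j * M - 1 \<le> b \<Longrightarrow> b \<le> j * M + M \<Longrightarrow> \<sigma> b = \<tau> j"
proof -
  obtain \<omega> where start: "\<And>j. \<omega> j 0 = \<tau> (j - 1)" and stop: "\<And>j. \<omega> j K = \<tau> j"
    and step: "\<And>j r. r < K \<Longrightarrow> (\<omega> j r, \<omega> j (Suc r)) \<in> R"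
    and const: "\<And>j r. \<tau> (j - 1) = \<tau> j \<Longrightarrow> \<omega> j r = \<tau> j"
    using walks_between_consecutive[of \<tau> R K] refl walk by metis
  define \<sigma> where "\<sigma> b = \<omega> (b div M) (b mod M)" for b
  have \<sigma>_at: "\<sigma> (j * M + r) = \<omega> j r" if "r < M" for j r
    using that by (simp add: \<sigma>_def)
  show ?thesis
  proof
    fix b
    show "(\<sigma> b, \<sigma> (Suc b)) \<in> R"
    proof (cases "b mod M = K")
      case True
      then have "b = b div M * M + K" "Suc b = Suc (b div M) * M + 0"
        using div_mult_mod_eq[of b M] by (simp_all add: M_def)
      then have "\<sigma> b = \<tau> (b div M)" "\<sigma> (Suc b) = \<tau> (b div M)"
        using \<sigma>_at[of K "b div M"] \<sigma>_at[of 0 "Suc (b div M)"] start stop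
        by (metis M_def lessI zero_less_Suc diff_Suc_1)+
      then show ?thesis using refl by simp
    next
      case False
      moreover have "b mod M < Suc K" unfolding M_def by (rule mod_less_divisor) simp
      ultimately have "b mod M < K" by linarith
      moreover have "b = b div M * M + b mod M" "Suc b = b div M * M + Suc (b mod M)"
        by simp_all
      ultimately show ?thesis using \<sigma>_at[of "b mod M" "b div M"] \<sigma>_at[of "Suc (b mod M)" "b div M"] step
        by (simp add: M_def)
    qed
  next
    fix j b
    assume unchanged: "\<tau> (j - 1) = \<tau> j" and b: "j * M - 1 \<le> b" "b \<le> j * M + M"
    consider "b < j * M" | "j * M \<le> b" "b < j * M + M" | "b = j * M + M"
      using b(2) by linarith
    then show "\<sigma> b = \<tau> j"
    proof cases
      case 1
      then obtain i where "j = Suc i" by (cases j) auto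
      with 1 b(1) have "b = i * M + K" by (simp add: M_def)
      then show ?thesis using \<sigma>_at[of K i] stop[of i] unchanged \<open>j = Suc i\<close> by (simp add: M_def)
    next
      case 2
      then have "b = j * M + (b - j * M)" "b - j * M < M" by simp_all
      then show ?thesis using \<sigma>_at[of "b - j * M" j] const[OF unchanged] by metis
    next
      case 3
      then have "b = Suc j * M + 0" by simp
      then show ?thesis using \<sigma>_at[of 0 "Suc j"] start[of "Suc j"] unchanged by (simp add: M_def)
    qed
  qed
qed

lemma int_steps_cross_zero:
  fixes h :: "nat \<Rightarrow> int"
  assumes step: "\<And>t. t < N \<Longrightarrow> \<bar>h (Suc t) - h t\<bar> \<le> D"
    and "h 0 \<le> 0" "0 \<le> h N" "0 \<le> D"
  shows "\<exists>t. \<bar>h t\<bar> \<le> D"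
proof -
  define t where "t = (LEAST t. 0 \<le> h t)"
  have t: "0 \<le> h t" "t \<le> N"
    unfolding t_def using assms(3) by (auto intro: LeastI Least_le)
  show ?thesis
  proof (cases t)
    case 0
    then show ?thesis using t assms(2,4) by (intro exI[of _ 0]) auto
  next
    case (Suc s)
    then have "h s < 0" using not_less_Least[of s "\<lambda>t. 0 \<le> h t"] unfolding t_def by auto
    moreover have "\<bar>h t - h s\<bar> \<le> D" using step[of s] Suc t(2) by simp
    ultimately show ?thesis using t(1) by (intro exI[of _ t]) auto
  qed
qed

lemma int_steps_antisymmetric_near_zero:
  fixes h :: "nat \<Rightarrow> int"
  assumes "\<And>t. t < N \<Longrightarrow> \<bar>h (Suc t) - h t\<bar> \<le> D" "h N = - h 0" "0 \<le> D"
  shows "\<exists>t. \<bar>h t\<bar> \<le> D"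
proof (cases "h 0 \<le> 0")
  case True
  then show ?thesis using int_steps_cross_zero[of N h D] assms by auto
next
  case False
  then have "\<exists>t. \<bar>- h t\<bar> \<le> D"
    using assms by (intro int_steps_cross_zero[of N]) (auto simp: abs_minus_commute)
  then show ?thesis by simp
qed

lemma sum_sign_eq_card_diff:
  assumes "finite X"
  shows "(\<Sum>x\<in>X. if P x then (1::int) else -1) = int (card {x\<in>X. P x}) - int (card {x\<in>X. \<not> P x})"
proof -
  have "X \<inter> {x. P x} = {x\<in>X. P x}" "X \<inter> - {x. P x} = {x\<in>X. \<not> P x}" by auto
  then show ?thesis using sum.If_cases[OF assms, of P "\<lambda>_. 1::int" "\<lambda>_. -1"] by simp
qed

text \<open>Moving the threshold \<open>t\<close> past one level of \<open>g\<close> changes the signed count by at most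
  twice the size of that level, and \<open>t = 0\<close> and \<open>t\<close> beyond all levels give opposite counts.\<close>

lemma balanced_threshold:
  fixes g :: "'a \<Rightarrow> nat"
  assumes X: "finite X" and level: "\<And>j. card {x\<in>X. g x = j} \<le> L"
  obtains t where "\<bar>int (card {x\<in>X. x \<in> A \<longleftrightarrow> g x < t}) - int (card {x\<in>X. \<not> (x \<in> A \<longleftrightarrow> g x < t)})\<bar>
    \<le> 2 * int L"
proof -
  define sgn where "sgn t x = (if x \<in> A \<longleftrightarrow> g x < t then (1::int) else -1)" for t x
  define h where "h t = (\<Sum>x\<in>X. sgn t x)" for t
  obtain N where N: "\<forall>y\<in>g ` X. y < N"
    using finite_nat_set_iff_bounded finite_imageI[OF X] by metis
  have "\<bar>h (Suc t) - h t\<bar> \<le> 2 * int L" for t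
  proof -
    have "\<bar>h (Suc t) - h t\<bar> \<le> (\<Sum>x\<in>X. \<bar>sgn (Suc t) x - sgn t x\<bar>)"
      unfolding h_def sum_subtractf[symmetric] by (rule sum_abs)
    also have "\<dots> \<le> (\<Sum>x\<in>X. if g x = t then 2 else 0)"
      by (rule sum_mono) (auto simp: sgn_def less_Suc_eq)
    also have "\<dots> = 2 * int (card {x\<in>X. g x = t})"
      using sum.inter_filter[OF X, of "\<lambda>_. 2::int" "\<lambda>x. g x = t"] by simp
    also have "\<dots> \<le> 2 * int L" using level[of t] by simp
    finally show ?thesis .
  qed
  moreover have "h N = - h 0"
    using N unfolding h_def sgn_def sum_negf[symmetric] by (intro sum.cong) auto
  ultimately obtain t where "\<bar>h t\<bar> \<le> 2 * int L"
    using int_steps_antisymmetric_near_zero[of N h "2 * int L"] by auto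
  then show ?thesis using that sum_sign_eq_card_diff[OF X] unfolding h_def sgn_def by auto
qed

lemma card_le_if_inj_on_interval:
  assumes "inj_on \<phi> X" "\<phi> ` X \<subseteq> {a..<b}"
  shows "card X \<le> b - a"
  using card_inj_on_le[OF assms] by simp

lemma card_div_level_le:
  fixes \<phi> :: "'a \<Rightarrow> nat"
  assumes "inj_on \<phi> X" "0 < L"
  shows "card {x\<in>X. \<phi> x div L = j} \<le> L"
proof -
  have "\<phi> x \<in> {j * L..<j * L + L}" if "\<phi> x div L = j" for x
  proof -
    have "\<phi> x div L * L \<le> \<phi> x" "\<phi> x < \<phi> x div L * L + L"
      using assms(2) dividend_less_div_times[of L "\<phi> x"] by simp_all
    then show ?thesis using that by simp
  qed
  then have "\<phi> ` {x\<in>X. \<phi> x div L = j} \<subseteq> {j * L..<j * L + L}" by blast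
  moreover have "inj_on \<phi> {x\<in>X. \<phi> x div L = j}" using assms(1) by (rule inj_on_subset) blast
  ultimately show ?thesis using card_le_if_inj_on_interval[of \<phi> _ "j * L" "j * L + L"] by simp
qed

lemma card_div_levels_le:
  fixes \<phi> :: "'a \<Rightarrow> nat"
  assumes "finite J" "inj_on \<phi> X" "0 < L"
  shows "card {x\<in>X. \<phi> x div L \<in> J} \<le> card J * L"
proof -
  have "{x\<in>X. \<phi> x div L \<in> J} = (\<Union>j\<in>J. {x\<in>X. \<phi> x div L = j})" by auto
  then have "card {x\<in>X. \<phi> x div L \<in> J} \<le> (\<Sum>j\<in>J. card {x\<in>X. \<phi> x div L = j})"
    using card_UN_le[OF assms(1)] by simp
  also have "\<dots> \<le> card J * L"
    by (rule order_trans[OF sum_mono[OF card_div_level_le[OF assms(2,3)]]]) simp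
  finally show ?thesis .
qed

lemma threshold_index:
  fixes C :: "nat \<Rightarrow> nat"
  assumes "0 < k" "C 0 = 0"
  obtains p :: "nat \<Rightarrow> nat" where "mono p" "\<And>j. p j \<in> {1..k}"
    "\<And>j. C (p j - 1) \<le> j * L" "\<And>j. p j < k \<Longrightarrow> j * L < C (p j)"
proof
  define p where "p j = (LEAST i. k \<le> i \<or> j * L < C i)" for j
  have p_pred: "k \<le> p j \<or> j * L < C (p j)" for j unfolding p_def by (rule LeastI[of _ k]) simp
  show "j * L < C (p j)" if "p j < k" for j
    using p_pred[of j] that by simp
  show "p j \<in> {1..k}" for j
  proof -
    have "p j \<le> k" unfolding p_def by (rule Least_le) simp
    moreover have "p j \<noteq> 0"
    proof
      assume "p j = 0"
      then show False using p_pred[of j] assms by simp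
    qed
    ultimately show ?thesis by simp
  qed
  then have "p j - 1 < p j" for j by (simp add: Suc_le_eq)
  then have below: "\<not> (k \<le> p j - 1 \<or> j * L < C (p j - 1))" for j
    unfolding p_def by (rule not_less_Least)
  show "C (p j - 1) \<le> j * L" for j using below[of j] by simp
  show "mono p"
  proof
    fix j j' :: nat assume "j \<le> j'"
    then have "j * L \<le> j' * L" by simp
    then have "k \<le> p j' \<or> j * L < C (p j')"
      using p_pred[of j'] by (meson le_less_trans)
    then show "p j \<le> p j'" unfolding p_def by (rule Least_le)
  qed
qed

lemma interval_partition_of_levels:
  fixes a :: "nat \<Rightarrow> nat" and \<phi> :: "'v \<Rightarrow> nat"
  assumes "0 < k" "0 < L" "inj_on \<phi> V" "\<And>v. v \<in> V \<Longrightarrow> \<phi> v \<le> (\<Sum>i = 1..k. a i)"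
  obtains p :: "nat \<Rightarrow> nat" where "mono p" "\<And>j. p j \<in> {1..k}"
    "\<And>i. i \<in> {1..k} \<Longrightarrow> card {v\<in>V. p (\<phi> v div L) = i} \<le> a i + L"
proof -
  define C where "C i = (\<Sum>l = 1..i. a l)" for i
  obtain p where mono: "mono p" and p_range: "\<And>j. p j \<in> {1..k}"
    and p_lo: "\<And>j. C (p j - 1) \<le> j * L" and p_hi: "\<And>j. p j < k \<Longrightarrow> j * L < C (p j)"
    using threshold_index[of k C L] assms(1) by (auto simp: C_def)
  have "card {v\<in>V. p (\<phi> v div L) = i} \<le> a i + L" if "i \<in> {1..k}" for i
  proof -
    have "\<phi> v \<in> {C (i - 1)..<C i + L}" if "v \<in> V" "p (\<phi> v div L) = i" for v
    proof -
      have lo: "\<phi> v div L * L \<le> \<phi> v" and hi: "\<phi> v < \<phi> v div L * L + L"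
        using assms(2) dividend_less_div_times[of L "\<phi> v"] by simp_all
      have "\<phi> v < C i + L"
      proof (cases "i < k")
        case True
        then show ?thesis using p_hi[of "\<phi> v div L"] that(2) hi by simp
      next
        case False
        then have "i = k" using \<open>i \<in> {1..k}\<close> by simp
        then show ?thesis using assms(2) assms(4)[OF \<open>v \<in> V\<close>] by (simp add: C_def)
      qed
      moreover have "C (i - 1) \<le> \<phi> v" using le_trans[OF p_lo[of "\<phi> v div L"] lo] that(2) by simp
      ultimately show ?thesis by simp
    qed
    then have "card {v\<in>V. p (\<phi> v div L) = i} \<le> C i + L - C (i - 1)"
      using assms(3) by (intro card_le_if_inj_on_interval) (auto intro: inj_on_subset)
    moreover have "C i = C (i - 1) + a i"
      using that by (cases i) (auto simp: C_def)
    ultimately show ?thesis by simp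
  qed
  with mono p_range show ?thesis using that by blast
qed

lemma jumps_of_mono:
  fixes p :: "nat \<Rightarrow> nat"
  assumes "mono p" "\<And>j. p j \<in> {1..k}"
  shows "finite {j. p (j - 1) \<noteq> p j}" "card {j. p (j - 1) \<noteq> p j} \<le> k"
proof -
  let ?D = "{j. p (j - 1) \<noteq> p j}"
  have less: "p j < p j'" if "j \<in> ?D" "j' \<in> ?D" "j < j'" for j j'
  proof -
    have "p j \<le> p (j' - 1)" "p (j' - 1) \<le> p j'" using that assms(1) by (auto intro: monoD)
    then show ?thesis using that by simp
  qed
  have inj: "inj_on p ?D"
  proof (rule inj_onI)
    fix j j' assume "j \<in> ?D" "j' \<in> ?D" "p j = p j'"
    then show "j = j'" using less[of j j'] less[of j' j] by (cases j j' rule: linorder_cases) auto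
  qed
  have sub: "p ` ?D \<subseteq> {1..k}" using assms(2) by auto
  show "finite ?D" using finite_subset[OF sub] inj by (simp add: finite_image_iff[symmetric])
  show "card ?D \<le> k" using card_inj_on_le[OF inj sub] by simp
qed

lemma changes_of_threshold_schedule:
  fixes p t :: "nat \<Rightarrow> nat" and G :: "nat \<Rightarrow> bool \<Rightarrow> 'b"
  defines "\<tau> \<equiv> \<lambda>j. G (p j) (j < t (p j))"
  assumes "mono p" "\<And>j. p j \<in> {1..k}"
  shows "finite {j. \<tau> (j - 1) \<noteq> \<tau> j}" "card {j. \<tau> (j - 1) \<noteq> \<tau> j} \<le> 2 * k"
proof -
  have sub: "{j. \<tau> (j - 1) \<noteq> \<tau> j} \<subseteq> {j. p (j - 1) \<noteq> p j} \<union> t ` {1..k}"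
  proof
    fix j assume j: "j \<in> {j. \<tau> (j - 1) \<noteq> \<tau> j}"
    show "j \<in> {j. p (j - 1) \<noteq> p j} \<union> t ` {1..k}"
    proof (cases "p (j - 1) = p j")
      case True
      have "(j - 1 < t (p j)) \<noteq> (j < t (p j))"
      proof
        assume "(j - 1 < t (p j)) = (j < t (p j))"
        with True have "\<tau> (j - 1) = \<tau> j" by (simp add: \<tau>_def)
        with j show False by simp
      qed
      then have "j = t (p j)" by (cases j) auto
      then show ?thesis using assms(3) by blast
    qed simp
  qed
  then show fin: "finite {j. \<tau> (j - 1) \<noteq> \<tau> j}"
    using jumps_of_mono[OF assms(2,3)] by (meson finite_UnI finite_imageI finite_atLeastAtMost finite_subset)
  have "card {j. \<tau> (j - 1) \<noteq> \<tau> j} \<le> card ({j. p (j - 1) \<noteq> p j} \<union> t ` {1..k})"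
    using sub jumps_of_mono[OF assms(2,3)] by (intro card_mono) auto
  also have "\<dots> \<le> card {j. p (j - 1) \<noteq> p j} + card (t ` {1..k})" by (rule card_Un_le)
  also have "\<dots> \<le> k + k"
    using jumps_of_mono[OF assms(2,3)] card_image_le[of "{1..k}" t] by (intro add_mono) auto
  finally show "card {j. \<tau> (j - 1) \<noteq> \<tau> j} \<le> 2 * k" by simp
qed

lemma sum_consecutive_pairs:
  fixes a :: "nat \<Rightarrow> 'b::comm_monoid_add"
  shows "(\<Sum>i = 1..k. a (2 * i - 1) + a (2 * i)) = (\<Sum>i = 1..2 * k. a i)"
  by (induction k) (simp_all add: sum.cl_ivl_Suc add.assoc)

section \<open>Oriented edges of the cycle with a chord\<close>

definition pair_state :: "nat \<Rightarrow> bool \<Rightarrow> nat \<times> nat" where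
  "pair_state i c = (if c then (2 * i - 1, 2 * i) else (2 * i, 2 * i - 1))"

text \<open>A state \<open>(a, b)\<close> colours the side \<open>A\<close> of a bipartition with \<open>a\<close> and the other side
  with \<open>b\<close>. A \<open>state_step\<close> from \<open>s\<close> to \<open>s'\<close> allows two consecutive blocks to be coloured
  by \<open>s\<close> and \<open>s'\<close> without breaking an edge of \<open>F\<close>.\<close>

definition edge_state :: "nat \<Rightarrow> nat set set \<Rightarrow> nat \<times> nat \<Rightarrow> bool" where
  "edge_state m F s \<longleftrightarrow> fst s \<in> {1..m} \<and> snd s \<in> {1..m} \<and> {fst s, snd s} \<in> F"

definition state_step :: "nat \<Rightarrow> nat set set \<Rightarrow> ((nat \<times> nat) \<times> (nat \<times> nat)) set" where
  "state_step m F = {(s, s'). edge_state m F s \<and> edge_state m F s' \<and>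
     {fst s, snd s'} \<in> F \<and> {snd s, fst s'} \<in> F}"

lemma sym_state_step: "sym (state_step m F)"
  unfolding sym_def state_step_def by (auto simp: insert_commute)

lemma state_step_refl: "edge_state m F s \<Longrightarrow> (s, s) \<in> state_step m F"
  unfolding state_step_def edge_state_def by (auto simp: insert_commute)

lemma state_step_swap:
  "(s, s') \<in> state_step m F \<Longrightarrow> (prod.swap s, prod.swap s') \<in> state_step m F"
  unfolding state_step_def edge_state_def by (auto simp: insert_commute)

lemma rtrancl_state_step_swap:
  assumes "(s, s') \<in> (state_step m F)\<^sup>*"
  shows "(prod.swap s, prod.swap s') \<in> (state_step m F)\<^sup>*"
  using assms
  by induction (auto intro: rtrancl_into_rtrancl state_step_swap)

lemma state_step_fst:
  "\<lbrakk>a \<in> {1..m}; a' \<in> {1..m}; b \<in> {1..m}; {a, b} \<in> F; {a', b} \<in> F\<rbrakk>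
    \<Longrightarrow> ((a, b), (a', b)) \<in> state_step m F"
  unfolding state_step_def edge_state_def by (auto simp: insert_commute)

lemma state_step_snd:
  "\<lbrakk>a \<in> {1..m}; b \<in> {1..m}; b' \<in> {1..m}; {a, b} \<in> F; {a, b'} \<in> F\<rbrakk>
    \<Longrightarrow> ((a, b), (a, b')) \<in> state_step m F"
  unfolding state_step_def edge_state_def by (auto simp: insert_commute)

lemma finite_state_step: "finite (state_step m F)"
  and card_state_step_le: "card (state_step m F) \<le> m ^ 4"
proof -
  have sub: "state_step m F \<subseteq> ({1..m} \<times> {1..m}) \<times> ({1..m} \<times> {1..m})"
    unfolding state_step_def edge_state_def by auto
  then show "finite (state_step m F)" by (rule finite_subset) simp
  have "card (state_step m F) \<le> card (({1..m} \<times> {1..m}) \<times> ({1..m} \<times> {1..m}))"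
    using sub by (intro card_mono) auto
  then show "card (state_step m F) \<le> m ^ 4"
    by (simp add: card_cartesian_product power4_eq_xxxx)
qed

text \<open>Two tokens advancing alternately along the walk \<open>x\<close>.\<close>

definition slide :: "(nat \<Rightarrow> 'a) \<Rightarrow> nat \<Rightarrow> 'a \<times> 'a" where
  "slide x r = (if even r then (x r, x (Suc r)) else (x (Suc r), x r))"

lemma slide_step:
  assumes "x r \<in> {1..m}" "x (Suc r) \<in> {1..m}" "x (Suc (Suc r)) \<in> {1..m}"
    and "{x r, x (Suc r)} \<in> F" "{x (Suc r), x (Suc (Suc r))} \<in> F"
  shows "(slide x r, slide x (Suc r)) \<in> state_step m F"
  using assms state_step_fst[of "x r" m "x (Suc (Suc r))" "x (Suc r)" F]
    state_step_snd[of "x (Suc r)" m "x r" "x (Suc (Suc r))" F]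
  by (auto simp: slide_def insert_commute)

lemma slide_rtrancl:
  assumes "\<And>r. r \<le> N \<Longrightarrow> x r \<in> {1..m}" and "\<And>r. r < N \<Longrightarrow> {x r, x (Suc r)} \<in> F"
  shows "j < N \<Longrightarrow> (slide x 0, slide x j) \<in> (state_step m F)\<^sup>*"
proof (induction j)
  case (Suc j)
  then have "(slide x j, slide x (Suc j)) \<in> state_step m F"
    using assms by (intro slide_step) auto
  with Suc show ?case by (auto intro: rtrancl_into_rtrancl)
qed simp

lemma cycle_chord_path_edge: "1 \<le> a \<Longrightarrow> a < 2 * k \<Longrightarrow> {a, Suc a} \<in> cycle_chord_edges k i1 i2"
  unfolding cycle_chord_edges_def by force

lemma cycle_chord_chord: "{2 * i1, 2 * i2} \<in> cycle_chord_edges k i1 i2"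
  unfolding cycle_chord_edges_def by blast

lemma edge_state_pair_state:
  "i \<in> {1..k} \<Longrightarrow> edge_state (2 * k) (cycle_chord_edges k i1 i2) (pair_state i c)"
  using cycle_chord_path_edge[of "2 * i - 1" k i1 i2]
  by (auto simp: edge_state_def pair_state_def insert_commute)

lemma cycle_path_slide:
  assumes "j < 2 * k - 1"
  shows "((1, 2), slide Suc j) \<in> (state_step (2 * k) (cycle_chord_edges k i1 i2))\<^sup>*"
proof -
  have "(slide Suc 0, slide Suc j) \<in> (state_step (2 * k) (cycle_chord_edges k i1 i2))\<^sup>*"
    using assms by (intro slide_rtrancl[of "2 * k - 1"] cycle_chord_path_edge) auto
  then show ?thesis by (simp add: slide_def numeral_2_eq_2)
qed

text \<open>The chord closes the odd cycle \<open>2a, 2a+1, \<dots>, 2b, 2a\<close>; sliding once around it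
  swaps the two coordinates of a state.\<close>

lemma chord_cycle_flip:
  assumes ab: "1 \<le> a" "a < b" "b \<le> k" and chord: "{2 * a, 2 * b} \<in> cycle_chord_edges k i1 i2"
  shows "((2 * a, 2 * a + 1), (2 * a + 1, 2 * a))
           \<in> (state_step (2 * k) (cycle_chord_edges k i1 i2))\<^sup>*"
proof -
  define y where "y r = 2 * a + r mod (2 * (b - a) + 1)" for r
  have "{y r, y (Suc r)} \<in> cycle_chord_edges k i1 i2" for r
  proof (cases "r mod (2 * (b - a) + 1) = 2 * (b - a)")
    case True
    then have "y r = 2 * b" "y (Suc r) = 2 * a"
      using ab by (auto simp: y_def mod_Suc)
    then show ?thesis using chord by (simp add: insert_commute)
  next
    case False
    have "r mod (2 * (b - a) + 1) < 2 * (b - a)"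
      using False mod_less_divisor[of "2 * (b - a) + 1" r] by linarith
    then have "y (Suc r) = Suc (y r)" "y r < 2 * b"
      using ab False by (auto simp: y_def mod_Suc)
    then show ?thesis using ab cycle_chord_path_edge[of "y r" k i1 i2] by (simp add: y_def)
  qed
  moreover have "y r \<in> {1..2 * k}" for r
  proof -
    have "r mod (2 * (b - a) + 1) < 2 * (b - a) + 1" by (rule mod_less_divisor) simp
    then have "y r \<le> 2 * b" using ab unfolding y_def by linarith
    then show ?thesis using ab by (simp add: y_def)
  qed
  ultimately have "(slide y 0, slide y (2 * (b - a) + 1))
                     \<in> (state_step (2 * k) (cycle_chord_edges k i1 i2))\<^sup>*"
    by (intro slide_rtrancl[of "2 * (b - a) + 2"]) auto
  moreover have "slide y 0 = (2 * a, 2 * a + 1)" "slide y (2 * (b - a) + 1) = (2 * a + 1, 2 * a)"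
    using ab by (simp_all add: slide_def y_def mod_Suc)
  ultimately show ?thesis by simp
qed

lemma pair_states_connected:
  fixes k i1 i2 :: nat
  defines "R \<equiv> state_step (2 * k) (cycle_chord_edges k i1 i2)"
  assumes "i1 \<in> {1..k}" "i2 \<in> {1..k}" "i1 \<noteq> i2" "i \<in> {1..k}" "i' \<in> {1..k}"
  shows "(pair_state i c, pair_state i' c') \<in> R\<^sup>*"
proof -
  define a where "a = min i1 i2"
  define b where "b = max i1 i2"
  have ab: "1 \<le> a" "a < b" "b \<le> k" using assms unfolding a_def b_def by auto
  have chord: "{2 * a, 2 * b} \<in> cycle_chord_edges k i1 i2"
    using cycle_chord_chord[of i1 i2 k] by (auto simp: a_def b_def min_def max_def insert_commute)
  have symR: "sym (R\<^sup>*)" unfolding R_def by (intro sym_rtrancl sym_state_step)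
  have path_a: "((1, 2), (2 * a + 1, 2 * a)) \<in> R\<^sup>*"
    using cycle_path_slide[of "2 * a - 1" k i1 i2] ab by (simp add: slide_def R_def)
  have "((2, 1), (2 * a, 2 * a + 1)) \<in> R\<^sup>*"
    using rtrancl_state_step_swap[OF path_a[unfolded R_def]] by (simp add: R_def)
  then have "((2 * a + 1, 2 * a), (2, 1)) \<in> R\<^sup>*"
    using chord_cycle_flip[OF ab chord] symR unfolding R_def by (meson rtrancl_trans symD)
  with path_a have swap12: "((1, 2), (2, 1)) \<in> R\<^sup>*" by (rule rtrancl_trans)
  have trues: "((1, 2), pair_state i True) \<in> R\<^sup>*" if "i \<in> {1..k}" for i
  proof -
    have "slide Suc (2 * i - 2) = pair_state i True"
      using that by (auto simp: slide_def pair_state_def)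
    then show ?thesis using cycle_path_slide[of "2 * i - 2" k i1 i2] that by (auto simp: R_def)
  qed
  have from12: "((1, 2), pair_state i c) \<in> R\<^sup>*" if "i \<in> {1..k}" for i c
  proof (cases c)
    case False
    have "((2, 1), pair_state i False) \<in> R\<^sup>*"
      using rtrancl_state_step_swap[OF trues[OF that, unfolded R_def]]
      by (simp add: pair_state_def R_def)
    with swap12 False show ?thesis by (simp add: rtrancl_trans)
  qed (use trues that in simp)
  show ?thesis using from12[of i c] from12[of i' c'] assms symR by (meson rtrancl_trans symD)
qed

lemma pair_state_walk:
  fixes k i1 i2 :: nat
  defines "R \<equiv> state_step (2 * k) (cycle_chord_edges k i1 i2)"
  assumes "i1 \<in> {1..k}" "i2 \<in> {1..k}" "i1 \<noteq> i2" "i \<in> {1..k}" "i' \<in> {1..k}"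
  shows "\<exists>w. w 0 = pair_state i c \<and> w ((2 * k) ^ 4) = pair_state i' c' \<and>
             (\<forall>r < (2 * k) ^ 4. (w r, w (Suc r)) \<in> R)"
proof -
  have "(pair_state i c, pair_state i' c') \<in> R ^^ ((2 * k) ^ 4)"
    unfolding R_def
    using pair_states_connected[OF assms(2-6)] card_state_step_le
    by (intro relpow_ge_card_if_rtrancl finite_state_step state_step_refl edge_state_pair_state assms)
  then show ?thesis unfolding relpow_fun_conv .
qed

lemma pair_state_eq_iff:
  "1 \<le> i \<Longrightarrow> 1 \<le> i' \<Longrightarrow> pair_state i c = pair_state i' c' \<longleftrightarrow> i = i' \<and> c = c'"
  by (auto simp: pair_state_def)

lemma side_of_pair_state:
  assumes "1 \<le> q" "1 \<le> i"
  shows "(if a then fst else snd) (pair_state q c) = 2 * i - 1 \<longleftrightarrow> pair_state q c = pair_state i a"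
    and "(if a then fst else snd) (pair_state q c) = 2 * i \<longleftrightarrow> pair_state q c = pair_state i (\<not> a)"
  using assms unfolding pair_state_def by auto presburger+

section \<open>Colouring banded bipartite graphs\<close>

lemma state_sequence_colouring:
  fixes \<tau> :: "nat \<Rightarrow> nat \<times> nat" and blk :: "'a \<Rightarrow> nat" and K :: nat
  defines "M \<equiv> Suc K"
  assumes sides: "\<And>u v. {u, v} \<in> E \<Longrightarrow> u \<in> A \<longleftrightarrow> v \<notin> A"
    and near: "\<And>u v. {u, v} \<in> E \<Longrightarrow> blk u \<le> Suc (blk v)"
    and valid: "\<And>j. edge_state m F (\<tau> j)"
    and walk: "\<And>j. \<exists>w. w 0 = \<tau> j \<and> w K = \<tau> (Suc j) \<and> (\<forall>r<K. (w r, w (Suc r)) \<in> state_step m F)"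
  obtains f where "\<And>v. f v \<in> {1..m}" and "\<And>u v. {u, v} \<in> E \<Longrightarrow> {f u, f v} \<in> F"
    and "\<And>v. \<tau> (blk v div M - 1) = \<tau> (blk v div M) \<Longrightarrow>
           f v = (if v \<in> A then fst else snd) (\<tau> (blk v div M))"
    and "\<And>u v. {u, v} \<in> E \<Longrightarrow> \<tau> (blk u div M - 1) = \<tau> (blk u div M) \<Longrightarrow>
           {f u, f v} = {fst (\<tau> (blk u div M)), snd (\<tau> (blk u div M))}"
proof -
  obtain \<sigma> where step: "\<And>b. (\<sigma> b, \<sigma> (Suc b)) \<in> state_step m F"
    and const: "\<And>j b. \<tau> (j - 1) = \<tau> j \<Longrightarrow> j * M - 1 \<le> b \<Longrightarrow> b \<le> j * M + M \<Longrightarrow> \<sigma> b = \<tau> j"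
    using walk_interpolation[of \<tau> "state_step m F" K] valid state_step_refl walk
    unfolding M_def by metis
  have \<sigma>_valid: "edge_state m F (\<sigma> b)" for b
    using step[of b] by (simp add: state_step_def)
  define f where "f v = (if v \<in> A then fst else snd) (\<sigma> (blk v))" for v
  have blk_near: "blk v = blk u \<or> blk v = Suc (blk u) \<or> blk u = Suc (blk v)" if "{u, v} \<in> E" for u v
    using near[OF that] near[of v u] that by (auto simp: insert_commute)
  have states_near: "(\<sigma> (blk u), \<sigma> (blk v)) \<in> state_step m F" if "{u, v} \<in> E" for u v
    using blk_near[OF that] step[of "blk u"] symD[OF sym_state_step step[of "blk v"]]
      state_step_refl[OF \<sigma>_valid] by auto
  have blk_bounds: "blk v div M * M \<le> blk v" "blk v < blk v div M * M + M" for v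
    using div_times_less_eq_dividend[of "blk v" M] dividend_less_div_times[of M "blk v"]
    unfolding M_def by linarith+
  have same_block: "blk u div M * M - 1 \<le> blk v \<and> blk v \<le> blk u div M * M + M"
    if "{u, v} \<in> E" for u v
    using blk_bounds[of u] blk_near[OF that] by arith
  show ?thesis
  proof
    show "f v \<in> {1..m}" for v using \<sigma>_valid by (simp add: f_def edge_state_def)
  next
    fix u v assume "{u, v} \<in> E"
    then show "{f u, f v} \<in> F"
      using states_near[of u v] sides[of u v]
      by (auto simp: f_def state_step_def insert_commute)
  next
    fix v assume "\<tau> (blk v div M - 1) = \<tau> (blk v div M)"
    moreover have "blk v div M * M - 1 \<le> blk v" "blk v \<le> blk v div M * M + M"
      using blk_bounds[of v] by linarith+
    ultimately have "\<sigma> (blk v) = \<tau> (blk v div M)" by (rule const)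
    then show "f v = (if v \<in> A then fst else snd) (\<tau> (blk v div M))"
      by (simp add: f_def)
  next
    fix u v assume e: "{u, v} \<in> E" and unchanged: "\<tau> (blk u div M - 1) = \<tau> (blk u div M)"
    have "\<sigma> (blk u) = \<tau> (blk u div M)"
      using blk_bounds[of u] by (intro const[OF unchanged]) linarith+
    moreover have "\<sigma> (blk v) = \<tau> (blk u div M)"
      using same_block[OF e] by (intro const[OF unchanged]) auto
    ultimately show "{f u, f v} = {fst (\<tau> (blk u div M)), snd (\<tau> (blk u div M))}"
      using sides[OF e] by (auto simp: f_def insert_commute)
  qed
qed

lemma balanced_pair_schedule:
  fixes \<phi> :: "'a \<Rightarrow> nat" and nn :: "nat \<Rightarrow> nat" and D :: real
  assumes V: "finite V" and inj: "inj_on \<phi> V" and bound: "\<And>v. v \<in> V \<Longrightarrow> \<phi> v \<le> n"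
    and k: "0 < k" and L: "0 < L" and sum: "(\<Sum>i = 1..2 * k. nn i) = n"
    and bal: "\<And>i. i \<in> {1..k} \<Longrightarrow> \<bar>real (nn (2 * i - 1)) - real (nn (2 * i))\<bar> \<le> D"
  obtains \<tau> where "\<And>j. \<exists>i\<in>{1..k}. \<exists>c. \<tau> j = pair_state i c"
    and "finite {j. \<tau> (j - 1) \<noteq> \<tau> j}" and "card {j. \<tau> (j - 1) \<noteq> \<tau> j} \<le> 2 * k"
    and "\<And>l. l \<in> {1..2 * k} \<Longrightarrow>
           real (card {v\<in>V. \<tau> (\<phi> v div L) = pair_state ((l + 1) div 2) (odd l \<longleftrightarrow> v \<in> A)})
           \<le> real (nn l) + D / 2 + 3 / 2 * real L"
proof -
  obtain p where p: "mono p" "\<And>j. p j \<in> {1..k}"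
    and cls: "\<And>i. i \<in> {1..k} \<Longrightarrow> card {v\<in>V. p (\<phi> v div L) = i} \<le> nn (2 * i - 1) + nn (2 * i) + L"
    using interval_partition_of_levels[of k L \<phi> V "\<lambda>i. nn (2 * i - 1) + nn (2 * i)"]
      k L inj bound sum sum_consecutive_pairs[of nn k] by auto
  define X where "X i t c = {v\<in>V. p (\<phi> v div L) = i \<and> (v \<in> A \<longleftrightarrow> \<phi> v div L < t) = c}" for i t c
  have "\<exists>t. \<bar>int (card (X i t True)) - int (card (X i t False))\<bar> \<le> 2 * int L" for i
  proof -
    have "card {v\<in>{v\<in>V. p (\<phi> v div L) = i}. \<phi> v div L = j} \<le> L" for j
      using card_div_level_le[OF inj_on_subset[OF inj] L, of "{v\<in>V. p (\<phi> v div L) = i}"] by auto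
    from balanced_threshold[OF _ this, of A] V obtain t where
      "\<bar>int (card {v\<in>{v\<in>V. p (\<phi> v div L) = i}. v \<in> A \<longleftrightarrow> \<phi> v div L < t})
        - int (card {v\<in>{v\<in>V. p (\<phi> v div L) = i}. \<not> (v \<in> A \<longleftrightarrow> \<phi> v div L < t)})\<bar> \<le> 2 * int L"
      by auto
    then show ?thesis unfolding X_def by (intro exI[of _ t]) (simp add: conj_ac)
  qed
  then obtain t where t: "\<And>i. \<bar>int (card (X i (t i) True)) - int (card (X i (t i) False))\<bar> \<le> 2 * int L"
    by metis
  define \<tau> where "\<tau> j = pair_state (p j) (j < t (p j))" for j
  have X_eq: "{v\<in>V. \<tau> (\<phi> v div L) = pair_state i (c \<longleftrightarrow> v \<in> A)} = X i (t i) c" if "i \<in> {1..k}" for i c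
    using that p(2) by (auto simp: X_def \<tau>_def pair_state_eq_iff)
  have X_bound: "real (card (X i (t i) c)) \<le> real (nn (if c then 2 * i - 1 else 2 * i)) + D / 2 + 3 / 2 * real L"
    if "i \<in> {1..k}" for i c
  proof -
    have "card (X i (t i) True) + card (X i (t i) False) = card {v\<in>V. p (\<phi> v div L) = i}"
      using V by (subst card_Un_disjoint[symmetric]) (auto simp: X_def intro: arg_cong[where f = card])
    then have "real (card (X i (t i) True)) + real (card (X i (t i) False))
                 \<le> real (nn (2 * i - 1)) + real (nn (2 * i)) + real L"
      using cls[OF that] by linarith
    moreover have "\<bar>real (card (X i (t i) True)) - real (card (X i (t i) False))\<bar> \<le> 2 * real L"
      using t[of i] by linarith
    ultimately show ?thesis using bal[OF that] by (cases c) (auto simp: abs_le_iff)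
  qed
  show ?thesis
  proof
    show "\<exists>i\<in>{1..k}. \<exists>c. \<tau> j = pair_state i c" for j using p(2) by (auto simp: \<tau>_def)
    show "finite {j. \<tau> (j - 1) \<noteq> \<tau> j}" "card {j. \<tau> (j - 1) \<noteq> \<tau> j} \<le> 2 * k"
      using changes_of_threshold_schedule[OF p, of pair_state t] by (simp_all add: \<tau>_def)
  next
    fix l assume l: "l \<in> {1..2 * k}"
    then have i: "(l + 1) div 2 \<in> {1..k}" by auto
    have "(if odd l then 2 * ((l + 1) div 2) - 1 else 2 * ((l + 1) div 2)) = l" by presburger
    then have "real (card (X ((l + 1) div 2) (t ((l + 1) div 2)) (odd l)))
                 \<le> real (nn l) + D / 2 + 3 / 2 * real L"
      using X_bound[OF i, of "odd l"] by (simp only:)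
    then show "real (card {v\<in>V. \<tau> (\<phi> v div L) = pair_state ((l + 1) div 2) (odd l \<longleftrightarrow> v \<in> A)})
                 \<le> real (nn l) + D / 2 + 3 / 2 * real L"
      unfolding X_eq[OF i, of "odd l"] .
  qed
qed

lemma colour_class_card_le:
  assumes "finite V" "S \<subseteq> V" "1 \<le> l"
    and pairs: "\<And>j. \<exists>q\<ge>1. \<exists>c. \<tau> j = pair_state q c"
    and colour: "\<And>v. v \<in> V \<Longrightarrow> v \<notin> S \<Longrightarrow> f v = (if v \<in> A then fst else snd) (\<tau> (g v))"
  shows "card {v\<in>V. f v = l}
           \<le> card S + card {v\<in>V. \<tau> (g v) = pair_state ((l + 1) div 2) (odd l \<longleftrightarrow> v \<in> A)}"
proof -
  define i where "i = (l + 1) div 2"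
  have "1 \<le> i" using assms(3) by (simp add: i_def)
  have side: "pair_state q c = pair_state i (odd l \<longleftrightarrow> a)"
    if "1 \<le> q" "(if a then fst else snd) (pair_state q c) = l" for q c a
  proof (cases "odd l")
    case True
    then have "l = 2 * i - 1" unfolding i_def by presburger
    then show ?thesis using that side_of_pair_state(1)[OF that(1) \<open>1 \<le> i\<close>] True by simp
  next
    case False
    then have "l = 2 * i" unfolding i_def by presburger
    then show ?thesis using that side_of_pair_state(2)[OF that(1) \<open>1 \<le> i\<close>] False by simp
  qed
  have "{v\<in>V. f v = l} \<subseteq> S \<union> {v\<in>V. \<tau> (g v) = pair_state i (odd l \<longleftrightarrow> v \<in> A)}"
  proof
    fix v assume v: "v \<in> {v\<in>V. f v = l}"
    show "v \<in> S \<union> {v\<in>V. \<tau> (g v) = pair_state i (odd l \<longleftrightarrow> v \<in> A)}"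
    proof (cases "v \<in> S")
      case False
      obtain q c where "1 \<le> q" "\<tau> (g v) = pair_state q c" using pairs by blast
      with v False show ?thesis using colour side by auto
    qed simp
  qed
  then show ?thesis
    using assms(1,2) unfolding i_def
    by (intro order_trans[OF card_mono card_Un_le]) (auto intro: finite_subset)
qed

lemma pair_schedule_colouring:
  fixes \<phi> :: "'a \<Rightarrow> nat" and W k i1 i2 :: nat and \<tau> :: "nat \<Rightarrow> nat \<times> nat"
  defines "L \<equiv> W * Suc ((2 * k) ^ 4)"
  assumes sides: "\<And>u v. {u, v} \<in> E \<Longrightarrow> u \<in> A \<longleftrightarrow> v \<notin> A"
    and band: "\<And>u v. {u, v} \<in> E \<Longrightarrow> \<phi> u \<le> \<phi> v + W" and W: "0 < W"
    and chord: "i1 \<in> {1..k}" "i2 \<in> {1..k}" "i1 \<noteq> i2"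
    and pairs: "\<And>j. \<exists>i\<in>{1..k}. \<exists>c. \<tau> j = pair_state i c"
  obtains f where "\<And>v. f v \<in> {1..2 * k}"
    and "\<And>u v. {u, v} \<in> E \<Longrightarrow> {f u, f v} \<in> cycle_chord_edges k i1 i2"
    and "\<And>v. \<tau> (\<phi> v div L - 1) = \<tau> (\<phi> v div L) \<Longrightarrow>
           f v = (if v \<in> A then fst else snd) (\<tau> (\<phi> v div L))"
    and "\<And>u v. {u, v} \<in> E \<Longrightarrow> \<tau> (\<phi> u div L - 1) = \<tau> (\<phi> u div L) \<Longrightarrow>
           \<exists>i\<in>{1..k}. {f u, f v} = {2 * i - 1, 2 * i}"
proof -
  define K where "K = (2 * k) ^ 4"
  define F where "F = cycle_chord_edges k i1 i2"
  define blk where "blk v = \<phi> v div W" for v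
  have blk_div: "blk v div Suc K = \<phi> v div L" for v
    unfolding blk_def L_def K_def[symmetric] by (simp only: div_mult2_eq)
  have near: "blk u \<le> Suc (blk v)" if "{u, v} \<in> E" for u v
    using div_le_mono[OF band[OF that], of W] W by (simp add: blk_def)
  have valid: "edge_state (2 * k) F (\<tau> j)" for j
    using pairs[of j] edge_state_pair_state[of _ k i1 i2] unfolding F_def by metis
  have walk: "\<exists>w. w 0 = \<tau> j \<and> w K = \<tau> (Suc j) \<and> (\<forall>r<K. (w r, w (Suc r)) \<in> state_step (2 * k) F)" for j
  proof -
    obtain i c i' c' where "i \<in> {1..k}" "\<tau> j = pair_state i c" "i' \<in> {1..k}" "\<tau> (Suc j) = pair_state i' c'"
      using pairs by metis
    then show ?thesis using pair_state_walk[OF chord, of i i' c c'] by (simp add: F_def K_def)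
  qed
  obtain f where f_range: "\<And>v. f v \<in> {1..2 * k}" and f_hom: "\<And>u v. {u, v} \<in> E \<Longrightarrow> {f u, f v} \<in> F"
    and f_unchanged: "\<And>v. \<tau> (blk v div Suc K - 1) = \<tau> (blk v div Suc K) \<Longrightarrow>
           f v = (if v \<in> A then fst else snd) (\<tau> (blk v div Suc K))"
    and edge: "\<And>u v. {u, v} \<in> E \<Longrightarrow> \<tau> (blk u div Suc K - 1) = \<tau> (blk u div Suc K) \<Longrightarrow>
           {f u, f v} = {fst (\<tau> (blk u div Suc K)), snd (\<tau> (blk u div Suc K))}"
    using state_sequence_colouring[where E = E and A = A and blk = blk and m = "2 * k" and F = F
        and \<tau> = \<tau> and K = K, OF sides near valid walk] by blast
  show ?thesis
  proof (rule that)
    show "\<And>v. f v \<in> {1..2 * k}" by (rule f_range)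
    show "\<And>u v. {u, v} \<in> E \<Longrightarrow> {f u, f v} \<in> cycle_chord_edges k i1 i2"
      using f_hom unfolding F_def .
    show "\<And>v. \<tau> (\<phi> v div L - 1) = \<tau> (\<phi> v div L) \<Longrightarrow>
            f v = (if v \<in> A then fst else snd) (\<tau> (\<phi> v div L))"
      using f_unchanged unfolding blk_div .
  next
    fix u v assume "{u, v} \<in> E" "\<tau> (\<phi> u div L - 1) = \<tau> (\<phi> u div L)"
    moreover obtain i c where "i \<in> {1..k}" "\<tau> (\<phi> u div L) = pair_state i c" using pairs by blast
    ultimately show "\<exists>i\<in>{1..k}. {f u, f v} = {2 * i - 1, 2 * i}"
      using edge[of u v] by (auto simp: blk_div pair_state_def insert_commute)
  qed
qed

lemma banded_bipartite_homomorphism: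
  fixes V :: "'a set" and E :: "'a set set" and A :: "'a set" and \<phi> :: "'a \<Rightarrow> nat"
    and W n k i1 i2 :: nat and nn :: "nat \<Rightarrow> nat" and D :: real
  defines "L \<equiv> W * Suc ((2 * k) ^ 4)"
  assumes V: "finite V"
    and edges: "\<And>u v. {u, v} \<in> E \<Longrightarrow> u \<in> V \<and> v \<in> V \<and> (u \<in> A \<longleftrightarrow> v \<notin> A)"
    and inj: "inj_on \<phi> V" and bound: "\<And>v. v \<in> V \<Longrightarrow> \<phi> v \<le> n"
    and band: "\<And>u v. {u, v} \<in> E \<Longrightarrow> \<phi> u \<le> \<phi> v + W" and W: "0 < W"
    and sum: "(\<Sum>i = 1..2 * k. nn i) = n"
    and bal: "\<And>i. i \<in> {1..k} \<Longrightarrow> \<bar>real (nn (2 * i - 1)) - real (nn (2 * i))\<bar> \<le> D"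
    and chord: "i1 \<in> {1..k}" "i2 \<in> {1..k}" "i1 \<noteq> i2"
  shows "\<exists>S f. S \<subseteq> V \<and> graph_hom V E (2 * k) (cycle_chord_edges k i1 i2) f \<and> card S \<le> 2 * k * L \<and>
    (\<forall>i\<in>{1..2 * k}. real (card {v\<in>V. f v = i}) \<le> real (nn i) + D / 2 + (2 * real k + 3 / 2) * real L) \<and>
    (\<forall>u v. {u, v} \<in> E \<and> \<not> (u \<in> S \<and> v \<in> S) \<longrightarrow> (\<exists>i\<in>{1..k}. {f u, f v} = {2 * i - 1, 2 * i}))"
proof -
  have k: "0 < k" and L: "0 < L" using chord W by (auto simp: L_def)
  obtain \<tau> where pairs: "\<And>j. \<exists>i\<in>{1..k}. \<exists>c. \<tau> j = pair_state i c"
    and fin_changes: "finite {j. \<tau> (j - 1) \<noteq> \<tau> j}" and changes: "card {j. \<tau> (j - 1) \<noteq> \<tau> j} \<le> 2 * k"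
    and classes: "\<And>l. l \<in> {1..2 * k} \<Longrightarrow>
           real (card {v\<in>V. \<tau> (\<phi> v div L) = pair_state ((l + 1) div 2) (odd l \<longleftrightarrow> v \<in> A)})
           \<le> real (nn l) + D / 2 + 3 / 2 * real L"
    by (rule balanced_pair_schedule[OF V inj bound k L sum bal, where A = A]) blast+
  have sides: "u \<in> A \<longleftrightarrow> v \<notin> A" if "{u, v} \<in> E" for u v
    using edges[OF that] by blast
  obtain f where range: "\<And>v. f v \<in> {1..2 * k}"
    and hom: "\<And>u v. {u, v} \<in> E \<Longrightarrow> {f u, f v} \<in> cycle_chord_edges k i1 i2"
    and unchanged: "\<And>v. \<tau> (\<phi> v div L - 1) = \<tau> (\<phi> v div L) \<Longrightarrow>
           f v = (if v \<in> A then fst else snd) (\<tau> (\<phi> v div L))"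
    and pair_edge: "\<And>u v. {u, v} \<in> E \<Longrightarrow> \<tau> (\<phi> u div L - 1) = \<tau> (\<phi> u div L) \<Longrightarrow>
           \<exists>i\<in>{1..k}. {f u, f v} = {2 * i - 1, 2 * i}"
    using pair_schedule_colouring[where \<tau> = \<tau> and \<phi> = \<phi>, OF sides band W chord pairs, folded L_def]
    by blast
  define S where "S = {v\<in>V. \<phi> v div L \<in> {j. \<tau> (j - 1) \<noteq> \<tau> j}}"
  have S: "S \<subseteq> V" by (auto simp: S_def)
  have card_S: "card S \<le> 2 * k * L"
    using card_div_levels_le[OF fin_changes inj L] changes unfolding S_def
    by (meson le_trans mult_le_mono1)
  define X where "X l = {v\<in>V. \<tau> (\<phi> v div L) = pair_state ((l + 1) div 2) (odd l \<longleftrightarrow> v \<in> A)}" for l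
  have "graph_hom V E (2 * k) (cycle_chord_edges k i1 i2) f"
    using range hom by (simp add: graph_hom_def)
  moreover have "real (card {v\<in>V. f v = l}) \<le> real (nn l) + D / 2 + (2 * real k + 3 / 2) * real L"
    if l: "l \<in> {1..2 * k}" for l
  proof -
    have "\<exists>q\<ge>1. \<exists>c. \<tau> j = pair_state q c" for j using pairs[of j] by auto
    moreover have "f v = (if v \<in> A then fst else snd) (\<tau> (\<phi> v div L))" if "v \<in> V" "v \<notin> S" for v
      using unchanged that by (simp add: S_def)
    ultimately have "card {v\<in>V. f v = l} \<le> card S + card (X l)"
      using l unfolding X_def by (intro colour_class_card_le[OF V S]) auto
    then have "real (card {v\<in>V. f v = l}) \<le> real (card S + card (X l))"
      by (rule of_nat_mono)
    moreover have "real (card S) \<le> 2 * real k * real L"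
      using of_nat_mono[OF card_S, where 'a = real] by simp
    moreover have "(2 * real k + 3 / 2) * real L = 2 * real k * real L + 3 / 2 * real L"
      by (simp add: algebra_simps)
    ultimately show ?thesis using classes[OF l, folded X_def] by simp
  qed
  moreover have "\<exists>i\<in>{1..k}. {f u, f v} = {2 * i - 1, 2 * i}"
    if "{u, v} \<in> E" "\<not> (u \<in> S \<and> v \<in> S)" for u v
    using that pair_edge[of u v] pair_edge[of v u] edges[OF that(1)]
    by (cases "u \<in> S") (auto simp: S_def insert_commute)
  ultimately show ?thesis
    using S card_S by (intro exI[of _ S] exI[of _ f] conjI ballI allI impI) auto
qed

lemma simple_graph_edge_vertices:
  "simple_graph V E \<Longrightarrow> {u, v} \<in> E \<Longrightarrow> u \<in> V \<and> v \<in> V"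
  unfolding simple_graph_def by (metis doubleton_eq_iff)

lemma bipartite_sides:
  assumes "simple_graph V E" "bipartite V E"
  obtains A where "\<And>u v. {u, v} \<in> E \<Longrightarrow> u \<in> A \<longleftrightarrow> v \<notin> A"
proof -
  obtain A B where AB: "A \<union> B = V" "A \<inter> B = {}" "\<forall>u v. {u, v} \<in> E \<longrightarrow> (u \<in> A \<longleftrightarrow> v \<in> B)"
    using assms(2) unfolding bipartite_def by blast
  have "u \<in> A \<longleftrightarrow> v \<notin> A" if "{u, v} \<in> E" for u v
  proof -
    have "v \<in> V" using simple_graph_edge_vertices[OF assms(1) that] by simp
    then have "v \<in> B \<longleftrightarrow> v \<notin> A" using AB(1,2) by blast
    then show ?thesis using AB(3) that by simp
  qed
  then show ?thesis by (rule that)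
qed

lemma bandwidth_labelling:
  assumes "bandwidth_le V E b" "b \<le> real W"
  obtains \<phi> :: "'a \<Rightarrow> nat" where "inj_on \<phi> V" "\<And>v. v \<in> V \<Longrightarrow> \<phi> v \<le> card V"
    "\<And>u v. {u, v} \<in> E \<Longrightarrow> \<phi> u \<le> \<phi> v + W"
proof -
  obtain \<phi> where bij: "bij_betw \<phi> V {1..card V}"
    and band: "\<forall>u v. {u, v} \<in> E \<longrightarrow> \<bar>real (\<phi> u) - real (\<phi> v)\<bar> \<le> b"
    using assms(1) unfolding bandwidth_le_def by blast
  have "\<phi> u \<le> \<phi> v + W" if "{u, v} \<in> E" for u v
  proof -
    have "real (\<phi> u) \<le> real (\<phi> v + W)" using band that assms(2) by fastforce
    then show ?thesis by (simp only: of_nat_le_iff)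
  qed
  moreover have "\<phi> v \<le> card V" if "v \<in> V" for v
    using bij_betw_apply[OF bij that] by simp
  ultimately show ?thesis using that bij_betw_imp_inj_on[OF bij] by blast
qed

lemma block_width_choice:
  fixes \<xi> c :: real
  assumes "0 < \<xi>" "0 < c"
  obtains \<beta> :: real and n0 :: nat where "0 < \<beta>"
    and "\<And>n. n0 \<le> n \<Longrightarrow> \<exists>W::nat. 0 < W \<and> \<beta> * real n \<le> real W \<and> c * real W \<le> \<xi> * real n"
proof -
  define \<beta> where "\<beta> = \<xi> / (2 * c)"
  have \<beta>: "0 < \<beta>" using assms by (simp add: \<beta>_def)
  have widths: "\<exists>W::nat. 0 < W \<and> \<beta> * real n \<le> real W \<and> c * real W \<le> \<xi> * real n"
    if "nat \<lceil>1 / \<beta>\<rceil> \<le> n" for n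
  proof -
    have "1 / \<beta> \<le> real n" using that by linarith
    then have n: "1 \<le> \<beta> * real n" using \<beta> by (simp add: field_simps)
    define W where "W = nat \<lceil>\<beta> * real n\<rceil>"
    have "\<beta> * real n \<le> real W" "real W \<le> 2 * (\<beta> * real n)" "0 < W"
      using n unfolding W_def by linarith+
    moreover have "c * real W \<le> c * (2 * (\<beta> * real n))"
      using calculation(2) assms(2) by (intro mult_left_mono) auto
    moreover have "c * (2 * (\<beta> * real n)) = \<xi> * real n"
      using assms by (simp add: \<beta>_def)
    ultimately show ?thesis by auto
  qed
  show ?thesis by (rule that[OF \<beta> widths])
qed

lemma bipartite_cycle_chord_homomorphism:
  fixes V :: "'a set" and nn :: "nat \<Rightarrow> nat" and k i1 i2 W :: nat and \<xi> \<beta> :: real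
  assumes graph: "simple_graph V E" "bipartite V E"
    and bandwidth: "bandwidth_le V E (\<beta> * real (card V))"
    and sum: "(\<Sum>i = 1..2 * k. nn i) = card V"
    and bal: "\<forall>i\<in>{1..k}. \<bar>real (nn (2 * i - 1)) - real (nn (2 * i))\<bar> \<le> \<xi> * real (card V)"
    and chord: "i1 \<in> {1..k}" "i2 \<in> {1..k}" "i1 \<noteq> i2"
    and W: "0 < W" "\<beta> * real (card V) \<le> real W"
    and small: "(4 * real k + 3) * real (Suc ((2 * k) ^ 4)) * real W \<le> \<xi> * real (card V)"
  shows "\<exists>S f. S \<subseteq> V \<and> graph_hom V E (2 * k) (cycle_chord_edges k i1 i2) f \<and>
           real (card S) \<le> \<xi> * real (card V) \<and>
           (\<forall>i\<in>{1..2 * k}. real (card {v\<in>V. f v = i}) \<le> real (nn i) + \<xi> * real (card V)) \<and>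
           (\<forall>u v. {u, v} \<in> E \<and> \<not> (u \<in> S \<and> v \<in> S) \<longrightarrow>
              (\<exists>i\<in>{1..k}. {f u, f v} = {2 * i - 1, 2 * i}))"
proof -
  define L where "L = W * Suc ((2 * k) ^ 4)"
  obtain A where sides: "\<And>u v. {u, v} \<in> E \<Longrightarrow> u \<in> A \<longleftrightarrow> v \<notin> A"
    using bipartite_sides[OF graph] by blast
  obtain \<phi> where inj: "inj_on \<phi> V" and bound: "\<And>v. v \<in> V \<Longrightarrow> \<phi> v \<le> card V"
    and band: "\<And>u v. {u, v} \<in> E \<Longrightarrow> \<phi> u \<le> \<phi> v + W"
    using bandwidth_labelling[OF bandwidth W(2)] by blast
  have finite: "finite V" using graph(1) by (simp add: simple_graph_def)
  have edges: "u \<in> V \<and> v \<in> V \<and> (u \<in> A \<longleftrightarrow> v \<notin> A)" if "{u, v} \<in> E" for u v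
    using simple_graph_edge_vertices[OF graph(1) that] sides[OF that] by blast
  have bal': "\<bar>real (nn (2 * i - 1)) - real (nn (2 * i))\<bar> \<le> \<xi> * real (card V)" if "i \<in> {1..k}" for i
    using bal that by blast
  obtain S f where S: "S \<subseteq> V" and hom: "graph_hom V E (2 * k) (cycle_chord_edges k i1 i2) f"
    and card_S: "card S \<le> 2 * k * L"
    and classes: "\<forall>i\<in>{1..2 * k}. real (card {v\<in>V. f v = i})
                    \<le> real (nn i) + \<xi> * real (card V) / 2 + (2 * real k + 3 / 2) * real L"
    and pairs: "\<forall>u v. {u, v} \<in> E \<and> \<not> (u \<in> S \<and> v \<in> S) \<longrightarrow> (\<exists>i\<in>{1..k}. {f u, f v} = {2 * i - 1, 2 * i})"
    using banded_bipartite_homomorphism[where E = E and A = A and \<phi> = \<phi> and n = "card V"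
        and D = "\<xi> * real (card V)", OF finite edges inj bound band W(1) sum bal' chord]
    unfolding L_def by blast
  have L_small: "(4 * real k + 3) * real L \<le> \<xi> * real (card V)"
    using small unfolding L_def of_nat_mult by (simp only: ac_simps)
  have "real (card S) \<le> \<xi> * real (card V)"
  proof -
    have "real (card S) \<le> 2 * real k * real L"
      using of_nat_mono[OF card_S, where 'a = real] by simp
    also have "\<dots> \<le> (4 * real k + 3) * real L" by (intro mult_right_mono) auto
    finally show ?thesis using L_small by linarith
  qed
  moreover have "\<forall>i\<in>{1..2 * k}. real (card {v\<in>V. f v = i}) \<le> real (nn i) + \<xi> * real (card V)"
  proof
    fix i assume "i \<in> {1..2 * k}"
    then have "real (card {v\<in>V. f v = i})
                 \<le> real (nn i) + \<xi> * real (card V) / 2 + (2 * real k + 3 / 2) * real L"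
      using classes by blast
    moreover have "(2 * real k + 3 / 2) * real L = (4 * real k + 3) * real L / 2"
      by (simp add: field_simps)
    ultimately show "real (card {v\<in>V. f v = i}) \<le> real (nn i) + \<xi> * real (card V)"
      using L_small by linarith
  qed
  ultimately show ?thesis using S hom pairs by blast
qed

theorem lemma8p1:
  fixes \<Delta> k :: nat and \<xi> :: real
  assumes "\<xi> > 0"
  shows "\<exists>lam>0. \<exists>\<beta>>0. \<exists>n0::nat.
    \<forall>(V :: nat set) (E :: nat set set) (nn :: nat \<Rightarrow> nat) (i1 :: nat) (i2 :: nat).
      simple_graph V E \<and> bipartite V E \<and> card V \<ge> n0 \<and>
      bandwidth_le V E (\<beta> * real (card V)) \<and> max_degree_le V E \<Delta> \<and>
      (\<Sum>i = 1..2 * k. nn i) = card V \<and>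
      (\<forall>i\<in>{1..2 * k}. real (nn i) > real (card V) / (3 * real k)) \<and>
      (\<forall>i\<in>{1..k}. \<bar>real (nn (2 * i - 1)) - real (nn (2 * i))\<bar> \<le> lam * real (card V)) \<and>
      i1 \<in> {1..k} \<and> i2 \<in> {1..k} \<and> i1 \<noteq> i2
      \<longrightarrow> (\<exists>S f. S \<subseteq> V \<and> graph_hom V E (2 * k) (cycle_chord_edges k i1 i2) f \<and>
             real (card S) \<le> \<xi> * real (card V) \<and>
             (\<forall>i\<in>{1..2 * k}. real (card {v\<in>V. f v = i}) \<le> real (nn i) + \<xi> * real (card V)) \<and>
             (\<forall>u v. {u, v} \<in> E \<and> \<not> (u \<in> S \<and> v \<in> S) \<longrightarrow>
                (\<exists>i\<in>{1..k}. {f u, f v} = {2 * i - 1, 2 * i})))"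
proof -
  have c: "0 < (4 * real k + 3) * real (Suc ((2 * k) ^ 4))"
    by (intro mult_pos_pos) (auto simp del: of_nat_Suc)
  obtain \<beta> n0 where \<beta>: "0 < \<beta>" and width: "\<And>n. n0 \<le> n \<Longrightarrow> \<exists>W::nat. 0 < W \<and>
      \<beta> * real n \<le> real W \<and> (4 * real k + 3) * real (Suc ((2 * k) ^ 4)) * real W \<le> \<xi> * real n"
    using block_width_choice[OF assms c] by blast
  show ?thesis
    apply (rule exI[of _ \<xi>], rule conjI[OF assms], rule exI[of _ \<beta>], rule conjI[OF \<beta>],
        rule exI[of _ n0], intro allI impI, elim conjE)
    subgoal premises H for V E nn i1 i2
    proof -
      obtain W where "0 < W" "\<beta> * real (card V) \<le> real W"
        "(4 * real k + 3) * real (Suc ((2 * k) ^ 4)) * real W \<le> \<xi> * real (card V)"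
        using width[OF H(3)] by blast
      then show ?thesis
        by (rule bipartite_cycle_chord_homomorphism[OF H(1,2,4,6,8,9,10,11)])
    qed
    done
qed

end
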